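(* For every $n\geq1$, $A_n(A_n^{n+1}-2A_n^n-2J_n)=0$.
   Context: For $\kappa\in(0,1/2)$, the paired tent map $T_\kappa:[-1,1]\to[-1,1]$ is $T_\kappa(x)=2(1+\kappa)(x+1)-1$ for $x\in[-1,-1/2]$, $T_\kappa(x)=-2(1+\kappa)x-1$ for $x\in[-1/2,0)$, $T_\kappa(0)=0$, $T_\kappa(x)=-2(1+\kappa)x+1$ for $x\in(0,1/2]$, $T_\kappa(x)=2(1+\kappa)(x-1)+1$ for $x\in[1/2,1]$. For $n\geq1$, $\kappa_n$ is the unique solution in $(0,1/2)$ of $(2+2\kappa)^n\kappa=1$, and $T_n=T_{\kappa_n}$. Let $r_0<\dots<r_{2n+4}$ enumerate increasingly the $2n+5$ distinct points of $\{-1,-1/2,0,1/2,1\}\cup\{T_n^i(\pm\kappa_n):0\le i\le n-1\}$ and $R_i=(r_{i-1},r_i)$. $A_n$ is the $(2n+4)\times(2n+4)$ matrix with $a_{ij}=1$ if $R_i\subset T_n(R_j)$ and $0$ otherwise. With $e_i$ the standard basis of $\mathbb C^{2n+4}$, $J_n$ is the permutation matrix with $J_ne_i=e_{2n+5-i}$. *)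

theory Defs
  imports Complex_Main "Jordan_Normal_Form.Matrix"
begin

definition paired_tent :: "real \<Rightarrow> real \<Rightarrow> real" where
  "paired_tent \<kappa> x =
     (if x \<le> -1/2 then 2*(1+\<kappa>)*(x+1) - 1
      else if x < 0 then -2*(1+\<kappa>)*x - 1
      else if x = 0 then 0
      else if x \<le> 1/2 then -2*(1+\<kappa>)*x + 1
      else 2*(1+\<kappa>)*(x-1) + 1)"

definition kappa :: "nat \<Rightarrow> real" where
  "kappa n = (THE \<kappa>. 0 < \<kappa> \<and> \<kappa> < 1/2 \<and> (2 + 2*\<kappa>)^n * \<kappa> = 1)"

definition Tn :: "nat \<Rightarrow> real \<Rightarrow> real" where
  "Tn n = paired_tent (kappa n)"

definition partition_pts :: "nat \<Rightarrow> real set" where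
  "partition_pts n = {-1, -1/2, 0, 1/2, 1}
     \<union> {(Tn n ^^ i) (kappa n) | i. i < n}
     \<union> {(Tn n ^^ i) (- kappa n) | i. i < n}"

definition r :: "nat \<Rightarrow> nat \<Rightarrow> real" where
  "r n i = sorted_list_of_set (partition_pts n) ! i"

text \<open>R_i = (r_{i-1}, r_i), for 1 \<le> i \<le> 2n+4.\<close>
definition R :: "nat \<Rightarrow> nat \<Rightarrow> real set" where
  "R n i = {r n (i - 1) <..< r n i}"

text \<open>The transition matrix A_n; Isabelle matrices are 0-indexed, so entry (i,j)
  corresponds to the paper's a_{i+1,j+1}.\<close>
definition A :: "nat \<Rightarrow> complex mat" where
  "A n = mat (2*n+4) (2*n+4)
     (\<lambda>(i,j). if R n (i+1) \<subseteq> Tn n ` R n (j+1) then 1 else 0)"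

text \<open>J_n e_i = e_{2n+5-i} (1-indexed), i.e. 0-indexed entry (i,j) is 1 iff i+j = 2n+3.\<close>
definition J :: "nat \<Rightarrow> complex mat" where
  "J n = mat (2*n+4) (2*n+4) (\<lambda>(i,j). if i + j = 2*n+3 then 1 else 0)"

end

theory Submission
  imports Defs "HOL-Library.Function_Algebras" "HOL-Library.Indicator_Function"
begin

(* Write c = 2 + 2 kappa. The orbit of -kappa is T^m(-kappa) = c^m kappa - 1 for 1 <= m <= n and
   reaches 0 at m = n, so the partition points are
   -1 < c kappa - 1 < ... < c^(n-1) kappa - 1 < -1/2 < -kappa < 0 together with their negatives.
   Every lap of T maps a partition interval affinely onto a run of consecutive ones, so A_n sends
   indicators of runs of intervals to sums of such indicators, and A_n commutes with J_n because T
   is odd. Hence Q = A^(n+1) - 2 A^n - 2 J commutes with A and J, and its kernel is invariant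
   under both.

   Let e be the indicator of (-kappa, 0). Then A^m e is the indicator of (-1, T^m(-kappa)); in
   particular A^n e indicates (-1, 0), which A maps to twice the indicator of (-1, kappa), since
   both laps in [-1, 0] cover (-1, kappa). This gives Q e = 0. From the A^m e, e and J e one
   obtains the indicators of (-1, r_b) for every b <= n + 3 except b = n, and each column of A_n
   indexed by an interval in [-1, 0] is a difference of two of them. So Q kills these columns, and
   the remaining ones by J-symmetry; thus A Q = Q A = 0. *)

section \<open>Matrices acting on sequences\<close>

(* A matrix acts on sequences nat => 'a as on column vectors, with value 0 beyond its rows, so
   that the action is linear without any dimension side conditions. *)

definition mat_app :: "'a::semiring_0 mat \<Rightarrow> (nat \<Rightarrow> 'a) \<Rightarrow> nat \<Rightarrow> 'a" where
  "mat_app M f = (\<lambda>i. if i < dim_row M then \<Sum>j<dim_col M. M $$ (i, j) * f j else 0)"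

lemma mat_app_add: "mat_app M (f + g) = mat_app M f + mat_app M g"
  by (auto simp: mat_app_def fun_eq_iff distrib_left sum.distrib)

lemma mat_app_diff: "mat_app (M :: 'a::ring mat) (f - g) = mat_app M f - mat_app M g"
  by (auto simp: mat_app_def fun_eq_iff right_diff_distrib sum_subtractf)

lemma mat_app_zero: "mat_app M 0 = 0"
  by (simp add: mat_app_def fun_eq_iff)

lemma mat_app_sum: "mat_app M (\<Sum>j\<in>S. f j) = (\<Sum>j\<in>S. mat_app M (f j))"
proof (induct S rule: infinite_finite_induct)
  case (infinite S)
  then show ?case by (metis sum.infinite mat_app_zero)
next
  case (insert x F)
  then show ?case by (simp only: sum.insert[OF insert(1,2)] mat_app_add insert(3))
qed (simp only: sum.empty mat_app_zero)

lemma mat_app_minus_mat: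
  fixes M M' :: "'a::ring mat"
  assumes "M \<in> carrier_mat nr nc" "M' \<in> carrier_mat nr nc"
  shows "mat_app (M - M') f = mat_app M f - mat_app M' f"
  using assms unfolding mat_app_def
  by (auto simp: fun_eq_iff left_diff_distrib sum_subtractf[symmetric])

lemma mat_app_smult_mat: "mat_app (c \<cdot>\<^sub>m M) f = (\<lambda>i. c * mat_app M f i)"
  by (auto simp: mat_app_def fun_eq_iff sum_distrib_left mult.assoc)

lemma mat_app_mult:
  assumes "dim_col M = dim_row X"
  shows "mat_app (M * X) f = mat_app M (mat_app X f)"
proof
  fix i
  show "mat_app (M * X) f i = mat_app M (mat_app X f) i"
  proof (cases "i < dim_row M")
    case True
    have "mat_app (M * X) f i = (\<Sum>l<dim_col X. \<Sum>j<dim_col M. M $$ (i, j) * X $$ (j, l) * f l)"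
      using True assms
      by (simp add: mat_app_def scalar_prod_def sum_distrib_right atLeast0LessThan)
    also have "\<dots> = (\<Sum>j<dim_col M. M $$ (i, j) * (\<Sum>l<dim_col X. X $$ (j, l) * f l))"
      by (subst sum.swap) (simp add: sum_distrib_left mult.assoc)
    also have "\<dots> = mat_app M (mat_app X f) i"
      using True assms by (simp add: mat_app_def)
    finally show ?thesis .
  qed (simp add: mat_app_def)
qed

lemma mat_app_one:
  fixes f :: "nat \<Rightarrow> 'a::semiring_1"
  shows "mat_app (1\<^sub>m N) f = (\<lambda>i. if i < N then f i else 0)"
proof
  fix i
  have "(\<Sum>j<N. 1\<^sub>m N $$ (i, j) * f j) = (\<Sum>j<N. if j = i then f j else 0)" if "i < N"
    using that by (intro sum.cong) auto
  then show "mat_app (1\<^sub>m N) f i = (if i < N then f i else 0)"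
    by (simp add: mat_app_def)
qed

lemma mat_app_indicator_singleton:
  assumes "j < dim_col (M :: 'a::semiring_1 mat)"
  shows "mat_app M (indicator {j}) = (\<lambda>i. if i < dim_row M then M $$ (i, j) else 0)"
  using assms
  by (auto simp: mat_app_def fun_eq_iff indicator_def of_bool_def if_distrib sum.delta' cong: if_cong)

lemma mat_eq_zero_if_mat_app_indicator:
  assumes "(M :: 'a::semiring_1 mat) \<in> carrier_mat nr nc"
    and "\<And>j. j < nc \<Longrightarrow> mat_app M (indicator {j}) = 0"
  shows "M = 0\<^sub>m nr nc"
proof (rule eq_matI)
  fix i j assume "i < dim_row (0\<^sub>m nr nc :: 'a mat)" "j < dim_col (0\<^sub>m nr nc :: 'a mat)"
  then show "M $$ (i, j) = 0\<^sub>m nr nc $$ (i, j)"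
    using assms mat_app_indicator_singleton[of j M] by (auto simp: fun_eq_iff dest!: spec[of _ i])
qed (use assms in auto)

lemma pow_mat_commute:
  assumes "X \<in> carrier_mat N N" "Y \<in> carrier_mat N N" "X * Y = Y * X"
  shows "X ^\<^sub>m k * Y = Y * X ^\<^sub>m k"
proof (induct k)
  case (Suc k)
  have "X ^\<^sub>m Suc k * Y = X ^\<^sub>m k * (X * Y)"
    using assms by (simp add: assoc_mult_mat[of _ N N _ N _ N])
  also have "\<dots> = (Y * X ^\<^sub>m k) * X"
    using assms Suc by (simp add: assoc_mult_mat[of _ N N _ N _ N, symmetric])
  finally show ?case
    using assms by (simp add: assoc_mult_mat[of _ N N _ N _ N])
qed (use assms in simp)

lemma mat_app_pow_Suc:
  assumes "M \<in> carrier_mat N N"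
  shows "mat_app (M ^\<^sub>m Suc k) f = mat_app M (mat_app (M ^\<^sub>m k) f)"
  using pow_mat_commute[OF assms assms refl, of k] assms by (simp add: mat_app_mult)

lemma mat_app_kernel_invariant:
  assumes "M \<in> carrier_mat N N" "X \<in> carrier_mat N N" "M * X = X * M" "mat_app X f = 0"
  shows "mat_app X (mat_app M f) = 0"
  using assms by (metis carrier_matD mat_app_mult mat_app_zero)

lemma mat_commute_minus_smult:
  fixes X Y Z :: "'a::comm_ring mat"
  assumes "X \<in> carrier_mat N N" "Y \<in> carrier_mat N N" "Z \<in> carrier_mat N N"
    and "X * Y = Y * X" "X * Z = Z * X"
  shows "X * (Y - c \<cdot>\<^sub>m Z) = (Y - c \<cdot>\<^sub>m Z) * X"
  using assms
  by (simp add: mult_minus_distrib_mat[of _ N N] minus_mult_distrib_mat[of _ N N]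
      mult_smult_distrib[of _ N N] mult_smult_assoc_mat[of _ N N])

definition exchange_mat :: "nat \<Rightarrow> 'a::zero_neq_one mat" where
  "exchange_mat N = mat N N (\<lambda>(i, j). if i + j + 1 = N then 1 else 0)"

lemma exchange_mat_carrier: "exchange_mat N \<in> carrier_mat N N"
  by (simp add: exchange_mat_def)

lemma mat_app_exchange_mat:
  fixes f :: "nat \<Rightarrow> 'a::semiring_1"
  shows "mat_app (exchange_mat N) f = (\<lambda>i. if i < N then f (N - 1 - i) else 0)"
proof -
  have "(\<Sum>j<N. (if i + j + 1 = N then 1 else 0) * f j) = f (N - 1 - i)" if "i < N" for i
  proof -
    have "(\<Sum>j<N. (if i + j + 1 = N then 1 else 0) * f j)
        = (\<Sum>j<N. if j = N - 1 - i then f j else 0)"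
      using that by (intro sum.cong) auto
    then show ?thesis using that by simp
  qed
  then show ?thesis by (auto simp: mat_app_def exchange_mat_def fun_eq_iff)
qed

lemma mat_app_exchange_mat_indicator:
  "j < N \<Longrightarrow>
    mat_app (exchange_mat N) (indicator {j}) = (indicator {N - 1 - j} :: nat \<Rightarrow> 'a::semiring_1)"
  by (auto simp: mat_app_exchange_mat fun_eq_iff indicator_def)

lemma centrosymmetric_exchange_commute:
  fixes M :: "'a::semiring_1 mat"
  assumes M: "M \<in> carrier_mat N N"
    and sym: "\<And>i j. i < N \<Longrightarrow> j < N \<Longrightarrow> M $$ (N - 1 - i, N - 1 - j) = M $$ (i, j)"
  shows "M * exchange_mat N = exchange_mat N * M"
proof (rule eq_matI)
  let ?E = "exchange_mat N :: 'a mat"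
  fix i j assume "i < dim_row (?E * M)" "j < dim_col (?E * M)"
  with M have ij: "i < N" "j < N" by (auto simp: exchange_mat_def)
  have entry: "X $$ (i, j) = mat_app X (indicator {j}) i" if "X \<in> carrier_mat N N" for X :: "'a mat"
    using that ij by (simp add: mat_app_indicator_singleton)
  have E: "?E \<in> carrier_mat N N" by (rule exchange_mat_carrier)
  have "(M * ?E) $$ (i, j) = mat_app M (mat_app ?E (indicator {j})) i"
    using M E by (simp add: entry[of "M * ?E"] mat_app_mult del: index_mult_mat)
  also have "\<dots> = mat_app M (indicator {N - 1 - j}) i"
    using ij by (simp add: mat_app_exchange_mat_indicator)
  also have "\<dots> = M $$ (N - 1 - i, j)"
    using M ij sym[of i "N - 1 - j"] by (simp add: mat_app_indicator_singleton)
  also have "\<dots> = mat_app ?E (mat_app M (indicator {j})) i"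
    using M ij by (simp add: mat_app_indicator_singleton mat_app_exchange_mat)
  also have "\<dots> = (?E * M) $$ (i, j)"
    using M E by (simp add: entry[of "?E * M"] mat_app_mult del: index_mult_mat)
  finally show "(M * ?E) $$ (i, j) = (?E * M) $$ (i, j)" .
qed (use M in \<open>auto simp: exchange_mat_def\<close>)

lemma indicator_atLeastLessThan_split:
  "a \<le> b \<Longrightarrow> b \<le> c \<Longrightarrow>
    indicator {a..<b} + indicator {b..<c} = (indicator {a..<c} :: nat \<Rightarrow> 'a::{monoid_add, zero_neq_one})"
  by (auto simp: fun_eq_iff indicator_def)

lemma indicator_atLeastLessThan_telescope:
  assumes "mono_on {a..b} F" "a \<le> b"
  shows "(\<Sum>j\<in>{a..<b}. indicator {F j..<F (Suc j)})
    = (indicator {F a..<F b} :: nat \<Rightarrow> 'a::{comm_monoid_add, zero_neq_one})"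
  using assms(2,1)
proof (induct b rule: dec_induct)
  case (step b)
  then have "F a \<le> F b" "F b \<le> F (Suc b)" "mono_on {a..b} F"
    by (auto elim!: mono_onD intro: mono_on_subset)
  with step show ?case
    by (simp add: indicator_atLeastLessThan_split)
qed (simp add: fun_eq_iff)

lemma mat_app_indicator_atLeastLessThan:
  fixes M :: "'a::semiring_1 mat"
  shows "mat_app M (indicator {a..<b}) = (\<Sum>j\<in>{a..<b}. mat_app M (indicator {j}))"
proof (cases "a \<le> b")
  case True
  have "(\<Sum>j\<in>{a..<b}. indicator {j} :: nat \<Rightarrow> 'a) = indicator {a..<b}"
    using indicator_atLeastLessThan_telescope[of a b "\<lambda>j. j", OF _ True]
    by (simp add: mono_on_def)
  then show ?thesis by (metis mat_app_sum)
next
  case False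
  then have "indicator {a..<b} = (0 :: nat \<Rightarrow> 'a)" by (simp add: fun_eq_iff)
  with False show ?thesis by (simp add: mat_app_zero)
qed

section \<open>The partition of the paired tent map\<close>

lemma image_affine_greaterThanLessThan:
  fixes a b \<alpha> \<beta> :: "'a::linordered_field"
  assumes "0 < \<alpha>"
  shows "(\<lambda>x. \<alpha> * x + \<beta>) ` {a<..<b} = {\<alpha> * a + \<beta><..<\<alpha> * b + \<beta>}"
proof
  show "(\<lambda>x. \<alpha> * x + \<beta>) ` {a<..<b} \<subseteq> {\<alpha> * a + \<beta><..<\<alpha> * b + \<beta>}"
    using assms by auto
  show "{\<alpha> * a + \<beta><..<\<alpha> * b + \<beta>} \<subseteq> (\<lambda>x. \<alpha> * x + \<beta>) ` {a<..<b}"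
  proof
    fix y assume "y \<in> {\<alpha> * a + \<beta><..<\<alpha> * b + \<beta>}"
    then have "(y - \<beta>) / \<alpha> \<in> {a<..<b}" "y = \<alpha> * ((y - \<beta>) / \<alpha>) + \<beta>"
      using assms by (auto simp: field_simps)
    then show "y \<in> (\<lambda>x. \<alpha> * x + \<beta>) ` {a<..<b}" by blast
  qed
qed

lemma image_affine_greaterThanLessThan_neg:
  fixes a b \<alpha> \<beta> :: "'a::linordered_field"
  assumes "\<alpha> < 0"
  shows "(\<lambda>x. \<alpha> * x + \<beta>) ` {a<..<b} = {\<alpha> * b + \<beta><..<\<alpha> * a + \<beta>}"
proof -
  have "(\<lambda>x. \<alpha> * x + \<beta>) ` {a<..<b} = (\<lambda>x. (- \<alpha>) * x + \<beta>) ` uminus ` {a<..<b}"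
    unfolding image_image by simp
  then show ?thesis
    using image_affine_greaterThanLessThan[where \<alpha> = "- \<alpha>" and a = "- b" and b = "- a"] assms
    by simp
qed

lemma paired_tent_odd: "paired_tent k (- x) = - paired_tent k x"
  by (cases "x = -1/2 \<or> x = 1/2") (auto simp: paired_tent_def algebra_simps)

lemma funpow_paired_tent_odd: "(paired_tent k ^^ m) (- x) = - (paired_tent k ^^ m) x"
  by (induct m) (simp_all add: paired_tent_odd)

lemma image_paired_tent_uminus: "paired_tent k ` (uminus ` S) = uminus ` paired_tent k ` S"
  by (simp add: image_comp comp_def paired_tent_odd)

locale tent_partition =
  fixes n :: nat and k :: real
  assumes n_pos: "1 \<le> n" and k_pos: "0 < k" and k_less_half: "k < 1/2"
    and k_root: "(2 + 2 * k) ^ n * k = 1"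
begin

(* pt i is the paper's r_i (see r_eq_pt); left_pt lists the points in [-1, 0]. *)

definition left_pt :: "nat \<Rightarrow> real" where
  "left_pt i = (if i = 0 then -1 else if i < n then (2 + 2 * k) ^ i * k - 1
     else if i = n then -1/2 else if i = n + 1 then - k else 0)"

definition pt :: "nat \<Rightarrow> real" where
  "pt i = (if i \<le> n + 2 then left_pt i else - left_pt (2 * n + 4 - i))"

lemma orbit_less_half: "m < n \<Longrightarrow> (2 + 2 * k) ^ m * k < 1/2"
proof -
  assume "m < n"
  then have "(2 + 2 * k) ^ m * k \<le> (2 + 2 * k) ^ (n - 1) * k"
    using k_pos by (intro mult_right_mono power_increasing) auto
  also have "(2 + 2 * k) * ((2 + 2 * k) ^ (n - 1) * k) = 1"
    using k_root n_pos by (metis Suc_diff_le diff_Suc_1 mult.assoc power_Suc)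
  then have "(2 + 2 * k) ^ (n - 1) * k = 1 / (2 + 2 * k)"
    using k_pos by (simp add: field_simps)
  also have "\<dots> < 1/2"
    using k_pos by (simp add: field_simps)
  finally show ?thesis .
qed

lemma left_pt_less_Suc:
  assumes "i \<le> n + 1"
  shows "left_pt i < left_pt (Suc i)"
proof -
  consider "i = 0" "n = 1" | "i = 0" "1 < n" | "0 < i" "Suc i < n" | "0 < i" "Suc i = n"
    | "i = n" | "i = n + 1"
    using assms n_pos by linarith
  then show ?thesis
  proof cases
    case 2
    then show ?thesis using k_pos by (simp add: left_pt_def)
  next
    case 3
    have "(2 + 2 * k) ^ i * k < (2 + 2 * k) ^ Suc i * k"
      using k_pos by (intro mult_strict_right_mono power_strict_increasing) auto
    with 3 show ?thesis by (simp add: left_pt_def)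
  next
    case 4
    then show ?thesis using orbit_less_half[of i] by (simp add: left_pt_def)
  qed (unfold left_pt_def, use k_pos k_less_half in auto)
qed

lemma pt_reflect: "i \<le> 2 * n + 4 \<Longrightarrow> pt (2 * n + 4 - i) = - pt i"
  by (auto simp: pt_def left_pt_def)

lemma pt_less_Suc:
  assumes "i < 2 * n + 4"
  shows "pt i < pt (Suc i)"
proof (cases "i \<le> n + 1")
  case True
  then show ?thesis using left_pt_less_Suc by (simp add: pt_def)
next
  case False
  define i' where "i' = 2 * n + 3 - i"
  have i': "i' \<le> n + 1" "i = 2 * n + 4 - Suc i'" "Suc i = 2 * n + 4 - i'"
    using False assms by (auto simp: i'_def)
  have "pt i' < pt (Suc i')"
    using left_pt_less_Suc[OF i'(1)] i'(1) by (simp add: pt_def)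
  then show ?thesis
    using pt_reflect[of i'] pt_reflect[of "Suc i'"] i' by simp
qed

lemma strict_mono_pt: "strict_mono_on {..2 * n + 4} pt"
  by (rule strict_mono_onI, rule lift_Suc_mono_less_ivl[where N = "{..<2 * n + 4}"])
    (auto intro: pt_less_Suc)

lemma pt_le_iff: "i \<le> 2 * n + 4 \<Longrightarrow> j \<le> 2 * n + 4 \<Longrightarrow> pt i \<le> pt j \<longleftrightarrow> i \<le> j"
  using strict_mono_on_less_eq[OF strict_mono_pt] by simp

lemma pt_values:
  shows "pt 0 = -1" "pt n = -1/2" "pt (n + 1) = - k" "pt (n + 2) = 0" "pt (n + 3) = k"
    and "0 < i \<Longrightarrow> i < n \<Longrightarrow> pt i = (2 + 2 * k) ^ i * k - 1"
  using n_pos by (auto simp: pt_def left_pt_def)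

definition orbit_idx :: "nat \<Rightarrow> nat" where
  "orbit_idx m = (if m < n then m else n + 2)"

lemma pt_orbit_idx: "0 < m \<Longrightarrow> m \<le> n \<Longrightarrow> pt (orbit_idx m) = (2 + 2 * k) ^ m * k - 1"
  using k_root pt_values(4) pt_values(6)[of m] by (auto simp: orbit_idx_def)

lemma orbit_idx_bounds: "orbit_idx m \<le> n + 2" "orbit_idx m \<noteq> n"
  by (auto simp: orbit_idx_def)

lemma paired_tent_orbit:
  assumes "0 < m" "m \<le> n"
  shows "(paired_tent k ^^ m) (- k) = (2 + 2 * k) ^ m * k - 1"
  using assms(2,1)
proof (induct m)
  case (Suc m)
  show ?case
  proof (cases "m = 0")
    case True
    then show ?thesis using k_pos k_less_half by (simp add: paired_tent_def algebra_simps)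
  next
    case False
    with Suc have "(paired_tent k ^^ Suc m) (- k) = paired_tent k ((2 + 2 * k) ^ m * k - 1)"
      by simp
    also have "\<dots> = (2 + 2 * k) ^ Suc m * k - 1"
      using orbit_less_half[of m] Suc by (simp add: paired_tent_def algebra_simps)
    finally show ?thesis .
  qed
qed simp

lemma left_points: "{-1, -1/2, 0} \<union> {(paired_tent k ^^ i) (- k) | i. i < n} = left_pt ` {..n + 2}"
proof -
  have orbit: "(paired_tent k ^^ i) (- k) = left_pt i" if "i \<in> {1..<n}" for i
    using that paired_tent_orbit[of i] by (simp add: left_pt_def)
  have "{i. i < n} = insert 0 {1..<n}"
    using n_pos by auto
  then have "{(paired_tent k ^^ i) (- k) | i. i < n}
      = (\<lambda>i. (paired_tent k ^^ i) (- k)) ` insert 0 {1..<n}"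
    by blast
  also have "\<dots> = insert (- k) (left_pt ` {1..<n})"
    using orbit by simp
  finally have "{-1, -1/2, 0} \<union> {(paired_tent k ^^ i) (- k) | i. i < n}
      = left_pt ` ({0, n, n + 1, n + 2} \<union> {1..<n})"
    by (auto simp: left_pt_def)
  also have "{0, n, n + 1, n + 2} \<union> {1..<n} = {..n + 2}"
    using n_pos by auto
  finally show ?thesis .
qed

lemma partition_points:
  "{-1, -1/2, 0, 1/2, 1} \<union> {(paired_tent k ^^ i) k | i. i < n}
    \<union> {(paired_tent k ^^ i) (- k) | i. i < n} = pt ` {..2 * n + 4}"
proof -
  let ?L = "{-1, -1/2, 0} \<union> {(paired_tent k ^^ i) (- k) | i. i < n}"
  have "{(paired_tent k ^^ i) k | i. i < n} = uminus ` {(paired_tent k ^^ i) (- k) | i. i < n}"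
    by (auto simp: funpow_paired_tent_odd image_iff) (metis minus_minus)
  then have "{-1, -1/2, 0, 1/2, 1} \<union> {(paired_tent k ^^ i) k | i. i < n}
      \<union> {(paired_tent k ^^ i) (- k) | i. i < n} = ?L \<union> uminus ` ?L"
    by auto
  also have "\<dots> = pt ` ({..n + 2} \<union> (\<lambda>i. 2 * n + 4 - i) ` {..n + 2})"
  proof -
    have "pt ` {..n + 2} = left_pt ` {..n + 2}"
      by (simp add: pt_def)
    moreover have "pt ` (\<lambda>i. 2 * n + 4 - i) ` {..n + 2} = uminus ` left_pt ` {..n + 2}"
      unfolding image_image by (rule image_cong[OF refl]) (simp add: pt_reflect, simp add: pt_def)
    ultimately show ?thesis by (simp only: left_points image_Un)
  qed
  also have "{..n + 2} \<union> (\<lambda>i. 2 * n + 4 - i) ` {..n + 2} = {..2 * n + 4}"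
  proof -
    have "x \<in> (\<lambda>i. 2 * n + 4 - i) ` {..n + 2}" if "n + 2 < x" "x \<le> 2 * n + 4" for x
      using that by (intro image_eqI[of _ _ "2 * n + 4 - x"]) auto
    then show ?thesis by (auto, meson not_le)
  qed
  finally show ?thesis .
qed

(* T maps r_i to r_(lap1_idx i) along the increasing lap [-1, -1/2], and to r_(lap2_idx i) along
   the decreasing lap [-1/2, 0), whose affine extension sends 0 to -1. *)

definition lap1_idx :: "nat \<Rightarrow> nat" where
  "lap1_idx i = (if i = 0 then 0 else if i < n then orbit_idx (Suc i) else n + 3)"

definition lap2_idx :: "nat \<Rightarrow> nat" where
  "lap2_idx i = (if i = n then n + 3 else if i = n + 1 then orbit_idx 1 else 0)"

lemma lap_idx_values:
  shows "lap1_idx 0 = 0" "lap1_idx n = n + 3"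
    and "lap2_idx n = n + 3" "lap2_idx (Suc n) = orbit_idx 1" "lap2_idx (Suc (Suc n)) = 0"
  using n_pos by (auto simp: lap1_idx_def lap2_idx_def)

lemma lap1_idx_bounds: "lap1_idx i \<le> n + 3" "lap1_idx i \<noteq> n"
  using orbit_idx_bounds[of "Suc i"] n_pos by (auto simp: lap1_idx_def)

lemma lap2_idx_bounds: "lap2_idx i \<le> n + 3" "lap2_idx i \<noteq> n"
  using orbit_idx_bounds[of 1] n_pos by (auto simp: lap2_idx_def)

lemma mono_lap1_idx: "mono_on {..n} lap1_idx"
  by (rule mono_onI) (auto simp: lap1_idx_def orbit_idx_def)

lemma pt_lap1_idx:
  assumes "i \<le> n"
  shows "pt (lap1_idx i) = (2 + 2 * k) * pt i + (1 + 2 * k)"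
proof -
  consider "i = 0" | "0 < i" "i < n" | "i = n"
    using assms by linarith
  then show ?thesis
  proof cases
    case 1
    then show ?thesis by (simp add: lap1_idx_def pt_values)
  next
    case 2
    then have "pt (lap1_idx i) = (2 + 2 * k) ^ Suc i * k - 1"
      by (simp add: lap1_idx_def pt_orbit_idx)
    with 2 show ?thesis by (simp add: pt_values algebra_simps)
  next
    case 3
    then show ?thesis using n_pos by (simp add: lap1_idx_def pt_values algebra_simps)
  qed
qed

lemma pt_lap2_idx:
  assumes "n \<le> i" "i \<le> n + 2"
  shows "pt (lap2_idx i) = (- (2 + 2 * k)) * pt i + (- 1)"
proof -
  consider "i = n" | "i = n + 1" | "i = n + 2"
    using assms by linarith
  then show ?thesis
  proof cases
    case 1
    then show ?thesis by (simp add: lap2_idx_def pt_values algebra_simps)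
  next
    case 2
    then show ?thesis
      using pt_orbit_idx[of 1] pt_values(3) n_pos by (simp add: lap2_idx_def algebra_simps)
  next
    case 3
    then show ?thesis using pt_values(1,4) by (simp add: lap2_idx_def)
  qed
qed

lemma image_lap1:
  assumes "j < n"
  shows "paired_tent k ` {pt j<..<pt (Suc j)} = {pt (lap1_idx j)<..<pt (lap1_idx (Suc j))}"
proof -
  have "pt (Suc j) \<le> pt n"
    using assms by (simp add: pt_le_iff)
  then have "paired_tent k x = (2 + 2 * k) * x + (1 + 2 * k)" if "x \<in> {pt j<..<pt (Suc j)}" for x
    using that pt_values(2) by (simp add: paired_tent_def algebra_simps)
  then have "paired_tent k ` {pt j<..<pt (Suc j)}
      = (\<lambda>x. (2 + 2 * k) * x + (1 + 2 * k)) ` {pt j<..<pt (Suc j)}"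
    by (rule image_cong[OF refl])
  also have "\<dots> = {(2 + 2 * k) * pt j + (1 + 2 * k)<..<(2 + 2 * k) * pt (Suc j) + (1 + 2 * k)}"
    using k_pos by (intro image_affine_greaterThanLessThan) simp
  also have "\<dots> = {pt (lap1_idx j)<..<pt (lap1_idx (Suc j))}"
    using assms by (simp add: pt_lap1_idx)
  finally show ?thesis .
qed

lemma image_lap2:
  assumes "n \<le> j" "j \<le> n + 1"
  shows "paired_tent k ` {pt j<..<pt (Suc j)} = {pt (lap2_idx (Suc j))<..<pt (lap2_idx j)}"
proof -
  have "pt n \<le> pt j" "pt (Suc j) \<le> pt (n + 2)"
    using assms by (simp_all add: pt_le_iff)
  then have "paired_tent k x = (- (2 + 2 * k)) * x + (- 1)" if "x \<in> {pt j<..<pt (Suc j)}" for x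
    using that pt_values(2,4) by (simp add: paired_tent_def algebra_simps)
  then have "paired_tent k ` {pt j<..<pt (Suc j)}
      = (\<lambda>x. (- (2 + 2 * k)) * x + (- 1)) ` {pt j<..<pt (Suc j)}"
    by (rule image_cong[OF refl])
  also have "\<dots> = {(- (2 + 2 * k)) * pt (Suc j) + (- 1)<..<(- (2 + 2 * k)) * pt j + (- 1)}"
    using k_pos by (intro image_affine_greaterThanLessThan_neg) simp
  also have "\<dots> = {pt (lap2_idx (Suc j))<..<pt (lap2_idx j)}"
    using assms by (simp add: pt_lap2_idx)
  finally show ?thesis .
qed

lemma pt_interval_subset_iff:
  assumes "i < 2 * n + 4" "a \<le> 2 * n + 4" "b \<le> 2 * n + 4"
  shows "{pt i<..<pt (Suc i)} \<subseteq> {pt a<..<pt b} \<longleftrightarrow> a \<le> i \<and> Suc i \<le> b"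
  using assms pt_less_Suc[of i]
  by (simp add: greaterThanLessThan_subseteq_greaterThanLessThan pt_le_iff)

end

section \<open>The transition matrix\<close>

lemma kappa_root:
  assumes "1 \<le> n"
  shows "0 < kappa n" "kappa n < 1/2" "(2 + 2 * kappa n) ^ n * kappa n = 1"
proof -
  define f where "f k = (2 + 2 * k) ^ n * k" for k :: real
  have mono: "strict_mono_on {0..} f"
  proof (rule strict_mono_onI)
    fix x y :: real assume "x \<in> {0..}" "y \<in> {0..}" "x < y"
    then show "f x < f y"
      unfolding f_def by (intro mult_le_less_imp_less power_mono) auto
  qed
  have "3 ^ 1 \<le> (3::real) ^ n"
    using assms by (intro power_increasing) auto
  then have f_half: "3/2 \<le> f (1/2)"
    by (simp add: f_def)
  have "continuous_on {0..1/2} f"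
    unfolding f_def by (intro continuous_intros)
  then obtain x where x: "0 \<le> x" "x \<le> 1/2" "f x = 1"
    using IVT'[of f 0 1 "1/2"] f_half by (auto simp: f_def)
  have x0: "x \<noteq> 0"
    using x by (auto simp: f_def)
  have x1: "x \<noteq> 1/2"
  proof
    assume "x = 1/2"
    with x(3) f_half show False by simp
  qed
  have "\<exists>!k. 0 < k \<and> k < 1/2 \<and> f k = 1"
    using x x0 x1 strict_mono_on_eq[OF mono] by (intro ex1I[of _ x]) force+
  then show "0 < kappa n" "kappa n < 1/2" "(2 + 2 * kappa n) ^ n * kappa n = 1"
    using theI'[of "\<lambda>k. 0 < k \<and> k < 1/2 \<and> f k = 1"] by (simp_all add: kappa_def f_def)
qed

locale tent_matrix =
  fixes n :: nat
  assumes one_le_n: "1 \<le> n"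

sublocale tent_matrix \<subseteq> tent_partition n "kappa n"
  using one_le_n kappa_root[OF one_le_n] by unfold_locales

lemma A_carrier: "A n \<in> carrier_mat (2 * n + 4) (2 * n + 4)"
  by (simp add: A_def)

lemma J_eq_exchange_mat: "J n = exchange_mat (2 * n + 4)"
  by (auto simp: J_def exchange_mat_def)

definition Q :: "nat \<Rightarrow> complex mat" where
  "Q n = A n ^\<^sub>m (n + 1) - 2 \<cdot>\<^sub>m A n ^\<^sub>m n - 2 \<cdot>\<^sub>m J n"

context tent_matrix
begin

lemma r_eq_pt: "i \<le> 2 * n + 4 \<Longrightarrow> r n i = pt i"
proof -
  assume i: "i \<le> 2 * n + 4"
  have "{0..<Suc (2 * n + 4)} = {..2 * n + 4}"
    by auto
  then have "partition_pts n = set (map pt [0..<Suc (2 * n + 4)])"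
    using partition_points by (simp only: partition_pts_def Tn_def set_map set_upt)
  moreover have "sorted_wrt (<) (map pt [0..<Suc (2 * n + 4)])"
    unfolding sorted_wrt_map
    by (rule sorted_wrt_mono_rel[OF _ sorted_wrt_upt])
      (auto intro: strict_mono_onD[OF strict_mono_pt])
  ultimately have "sorted_list_of_set (partition_pts n) = map pt [0..<Suc (2 * n + 4)]"
    by (metis sorted_list_of_set.idem_if_sorted_distinct strict_sorted_iff)
  then show ?thesis
    using i by (simp add: r_def del: upt_Suc)
qed

lemma A_entry:
  assumes "i < 2 * n + 4" "j < 2 * n + 4"
  shows "A n $$ (i, j) =
    (if {pt i<..<pt (Suc i)} \<subseteq> paired_tent (kappa n) ` {pt j<..<pt (Suc j)} then 1 else 0)"
  using assms by (simp add: A_def R_def r_eq_pt Tn_def)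

lemma A_centrosymmetric:
  assumes "i < 2 * n + 4" "j < 2 * n + 4"
  shows "A n $$ (2 * n + 4 - 1 - i, 2 * n + 4 - 1 - j) = A n $$ (i, j)"
proof -
  have reflect: "{pt (2 * n + 4 - 1 - i)<..<pt (Suc (2 * n + 4 - 1 - i))}
      = uminus ` {pt i<..<pt (Suc i)}" if "i < 2 * n + 4" for i
  proof -
    have "2 * n + 4 - 1 - i = 2 * n + 4 - Suc i" "Suc (2 * n + 4 - 1 - i) = 2 * n + 4 - i"
      using that by auto
    then show ?thesis
      using that pt_reflect[of i] pt_reflect[of "Suc i"] by simp
  qed
  have idx: "2 * n + 4 - 1 - i < 2 * n + 4" "2 * n + 4 - 1 - j < 2 * n + 4"
    by auto
  have "A n $$ (2 * n + 4 - 1 - i, 2 * n + 4 - 1 - j) = (if uminus ` {pt i<..<pt (Suc i)}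
      \<subseteq> paired_tent (kappa n) ` uminus ` {pt j<..<pt (Suc j)} then 1 else 0)"
    unfolding A_entry[OF idx] reflect[OF assms(1)] reflect[OF assms(2)] ..
  then show ?thesis
    using assms by (simp add: A_entry image_paired_tent_uminus inj_image_subset_iff
        del: image_uminus_greaterThanLessThan)
qed

lemma A_column:
  assumes "j < 2 * n + 4" "a \<le> 2 * n + 4" "b \<le> 2 * n + 4"
    and "paired_tent (kappa n) ` {pt j<..<pt (Suc j)} = {pt a<..<pt b}"
  shows "mat_app (A n) (indicator {j}) = indicator {a..<b}"
  using assms A_carrier[of n]
  by (auto simp: fun_eq_iff mat_app_indicator_singleton A_entry pt_interval_subset_iff indicator_def)

lemma A_column_lap1:
  "j < n \<Longrightarrow> mat_app (A n) (indicator {j}) = indicator {lap1_idx j..<lap1_idx (Suc j)}"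
  using lap1_idx_bounds(1)[of j] lap1_idx_bounds(1)[of "Suc j"]
  by (intro A_column image_lap1) auto

lemma A_column_lap2:
  "n \<le> j \<Longrightarrow> j \<le> n + 1 \<Longrightarrow>
    mat_app (A n) (indicator {j}) = indicator {lap2_idx (Suc j)..<lap2_idx j}"
  using lap2_idx_bounds(1)[of j] lap2_idx_bounds(1)[of "Suc j"]
  by (intro A_column image_lap2) auto

lemma A_prefix_lap1: "b \<le> n \<Longrightarrow> mat_app (A n) (indicator {..<b}) = indicator {..<lap1_idx b}"
proof -
  assume b: "b \<le> n"
  have "mat_app (A n) (indicator {0..<b}) = (\<Sum>j\<in>{0..<b}. mat_app (A n) (indicator {j}))"
    by (rule mat_app_indicator_atLeastLessThan)
  also have "\<dots> = (\<Sum>j\<in>{0..<b}. indicator {lap1_idx j..<lap1_idx (Suc j)})"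
    using b by (intro sum.cong refl A_column_lap1) auto
  also have "\<dots> = indicator {lap1_idx 0..<lap1_idx b}"
    using b by (intro indicator_atLeastLessThan_telescope mono_on_subset[OF mono_lap1_idx]) auto
  finally show ?thesis
    by (simp add: lap_idx_values atLeast0LessThan)
qed

lemma A_left_half: "mat_app (A n) (indicator {..<n + 2}) = 2 * indicator {..<n + 3}"
proof -
  have "indicator {..<n + 2}
      = indicator {..<n} + indicator {n} + (indicator {n + 1} :: nat \<Rightarrow> complex)"
    by (auto simp: fun_eq_iff indicator_def)
  then have "mat_app (A n) (indicator {..<n + 2})
      = indicator {..<n + 3} + indicator {orbit_idx 1..<n + 3} + indicator {..<orbit_idx 1}"
    by (simp only: mat_app_add A_prefix_lap1 A_column_lap2 lap_idx_values order.refl)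
      (simp add: lap_idx_values atLeast0LessThan)
  then show ?thesis
    using orbit_idx_bounds[of 1] by (auto simp: fun_eq_iff indicator_def)
qed

lemma A_pow_orbit:
  "0 < m \<Longrightarrow> m \<le> n \<Longrightarrow> mat_app (A n ^\<^sub>m m) (indicator {n + 1}) = indicator {..<orbit_idx m}"
proof (induct m)
  case (Suc m)
  have step: "mat_app (A n ^\<^sub>m Suc m) (indicator {n + 1})
      = mat_app (A n) (mat_app (A n ^\<^sub>m m) (indicator {n + 1}))"
    by (rule mat_app_pow_Suc[OF A_carrier])
  show ?case
  proof (cases "m = 0")
    case True
    have "mat_app (A n ^\<^sub>m 0) (indicator {n + 1}) = (indicator {n + 1} :: nat \<Rightarrow> complex)"
      using A_carrier[of n] by (auto simp: mat_app_one fun_eq_iff indicator_def)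
    with True show ?thesis
      unfolding step by (simp add: A_column_lap2 lap_idx_values atLeast0LessThan)
  next
    case False
    with Suc show ?thesis
      unfolding step by (simp add: A_prefix_lap1 orbit_idx_def lap1_idx_def)
  qed
qed simp

lemma A_J_commute: "A n * J n = J n * A n"
  unfolding J_eq_exchange_mat using A_carrier A_centrosymmetric
  by (intro centrosymmetric_exchange_commute) auto

lemma Q_carrier: "Q n \<in> carrier_mat (2 * n + 4) (2 * n + 4)"
  using A_carrier[of n] by (simp add: Q_def J_def minus_carrier_mat)

lemma Q_commute: "A n * Q n = Q n * A n" "J n * Q n = Q n * J n"
proof -
  have A: "A n \<in> carrier_mat (2 * n + 4) (2 * n + 4)"
    and J: "J n \<in> carrier_mat (2 * n + 4) (2 * n + 4)"
    by (simp_all add: A_carrier J_def)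
  have A_pow: "A n * A n ^\<^sub>m m = A n ^\<^sub>m m * A n" for m
    using pow_mat_commute[OF A A refl] by simp
  have J_pow: "J n * A n ^\<^sub>m m = A n ^\<^sub>m m * J n" for m
    using pow_mat_commute[OF A J A_J_commute] by simp
  show "A n * Q n = Q n * A n"
    unfolding Q_def
    by (intro mat_commute_minus_smult[of _ "2 * n + 4"] A_pow A_J_commute)
      (simp_all add: A J minus_carrier_mat del: pow_mat.simps)
  show "J n * Q n = Q n * J n"
    unfolding Q_def
    by (intro mat_commute_minus_smult[of _ "2 * n + 4"] J_pow refl)
      (simp_all add: A J minus_carrier_mat del: pow_mat.simps)
qed

lemma mat_app_Q:
  "mat_app (Q n) f
    = mat_app (A n) (mat_app (A n ^\<^sub>m n) f) - 2 * mat_app (A n ^\<^sub>m n) f - 2 * mat_app (J n) f"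
proof -
  have C: "A n ^\<^sub>m Suc n \<in> carrier_mat (2 * n + 4) (2 * n + 4)"
    "2 \<cdot>\<^sub>m A n ^\<^sub>m n \<in> carrier_mat (2 * n + 4) (2 * n + 4)"
    "2 \<cdot>\<^sub>m J n \<in> carrier_mat (2 * n + 4) (2 * n + 4)"
    using A_carrier[of n] by (simp_all add: J_def del: pow_mat.simps)
  have "mat_app (Q n) f = mat_app (A n ^\<^sub>m Suc n) f - mat_app (2 \<cdot>\<^sub>m A n ^\<^sub>m n) f
      - mat_app (2 \<cdot>\<^sub>m J n) f"
    unfolding Q_def Suc_eq_plus1[symmetric]
    by (simp only: mat_app_minus_mat[OF minus_carrier_mat[OF C(2)] C(3)]
        mat_app_minus_mat[OF C(1,2)])
  then show ?thesis
    by (simp add: mat_app_smult_mat mat_app_pow_Suc[OF A_carrier] fun_eq_iff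
        del: pow_mat.simps)
qed

lemma Q_kills_indicator_Suc_n: "mat_app (Q n) (indicator {n + 1}) = 0"
proof -
  have "mat_app (A n ^\<^sub>m n) (indicator {n + 1}) = indicator {..<n + 2}"
    using A_pow_orbit[of n] one_le_n by (simp add: orbit_idx_def)
  moreover have "mat_app (J n) (indicator {n + 1}) = indicator {n + 2}"
    by (simp add: J_eq_exchange_mat mat_app_exchange_mat_indicator)
  ultimately have "mat_app (Q n) (indicator {n + 1})
      = 2 * indicator {..<n + 3} - 2 * indicator {..<n + 2} - 2 * indicator {n + 2}"
    by (simp only: mat_app_Q A_left_half)
  also have "\<dots> = 0"
    by (auto simp: fun_eq_iff indicator_def)
  finally show ?thesis .
qed

lemma Q_kernel_A_pow: "mat_app (Q n) f = 0 \<Longrightarrow> mat_app (Q n) (mat_app (A n ^\<^sub>m m) f) = 0"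
  using pow_mat_commute[OF A_carrier Q_carrier Q_commute(1)]
  by (intro mat_app_kernel_invariant[OF pow_carrier_mat[OF A_carrier] Q_carrier]) auto

lemma Q_kernel_J: "mat_app (Q n) f = 0 \<Longrightarrow> mat_app (Q n) (mat_app (J n) f) = 0"
  using Q_commute(2) by (intro mat_app_kernel_invariant[OF _ Q_carrier]) (auto simp: J_def)

lemma Q_kills_prefix:
  assumes "b \<le> n + 3" "b \<noteq> n"
  shows "mat_app (Q n) (indicator {..<b}) = 0"
proof -
  let ?e = "indicator {n + 1} :: nat \<Rightarrow> complex"
  have orbit: "mat_app (Q n) (indicator {..<orbit_idx m}) = 0" if "0 < m" "m \<le> n" for m
    using Q_kernel_A_pow[OF Q_kills_indicator_Suc_n, of m] A_pow_orbit[OF that] by simp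
  have n2: "mat_app (Q n) (indicator {..<n + 2}) = 0"
    using orbit[of n] one_le_n by (simp add: orbit_idx_def)
  consider "b = 0" | "0 < b" "b < n" | "b = n + 1" | "b = n + 2" | "b = n + 3"
    using assms by linarith
  then show ?thesis
  proof cases
    case 1
    then have "indicator {..<b} = (0 :: nat \<Rightarrow> complex)" by (simp add: fun_eq_iff)
    then show ?thesis by (simp add: mat_app_zero)
  next
    case 2
    then show ?thesis using orbit[of b] by (simp add: orbit_idx_def)
  next
    case 3
    have "indicator {..<n + 1} = indicator {..<n + 2} - ?e"
      by (auto simp: fun_eq_iff indicator_def)
    then show ?thesis
      unfolding 3 by (simp only: mat_app_diff n2 Q_kills_indicator_Suc_n diff_self)
  next
    case 4
    then show ?thesis using n2 by simp
  next
    case 5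
    have "indicator {..<n + 3} = indicator {..<n + 2} + mat_app (J n) ?e"
      by (auto simp: fun_eq_iff indicator_def J_eq_exchange_mat mat_app_exchange_mat)
    then show ?thesis
      unfolding 5 by (simp only: mat_app_add n2 Q_kernel_J[OF Q_kills_indicator_Suc_n] add_0)
  qed
qed

lemma Q_kills_interval:
  assumes "a \<le> b" "b \<le> n + 3" "a \<noteq> n" "b \<noteq> n"
  shows "mat_app (Q n) (indicator {a..<b}) = 0"
proof -
  have "indicator {a..<b} = indicator {..<b} - (indicator {..<a} :: nat \<Rightarrow> complex)"
    using assms(1) by (auto simp: fun_eq_iff indicator_def)
  then show ?thesis
    using assms by (simp add: mat_app_diff Q_kills_prefix)
qed

lemma Q_kills_A_column:
  assumes "j < 2 * n + 4"
  shows "mat_app (Q n) (mat_app (A n) (indicator {j})) = 0"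
proof -
  have left: "mat_app (Q n) (mat_app (A n) (indicator {j})) = 0" if "j < n + 2" for j
  proof (cases "j < n")
    case True
    have "lap1_idx j \<le> lap1_idx (Suc j)"
      using True by (intro mono_onD[OF mono_lap1_idx]) auto
    with True show ?thesis
      by (simp add: A_column_lap1 Q_kills_interval lap1_idx_bounds)
  next
    case False
    with that have "lap2_idx (Suc j) \<le> lap2_idx j"
      using orbit_idx_bounds[of 1] by (auto simp: lap2_idx_def)
    with False that show ?thesis
      by (simp add: A_column_lap2 Q_kills_interval lap2_idx_bounds)
  qed
  show ?thesis
  proof (cases "j < n + 2")
    case False
    define j' where "j' = 2 * n + 4 - 1 - j"
    have j': "j' < n + 2" "indicator {j} = mat_app (J n) (indicator {j'})"
      using assms False by (auto simp: j'_def J_eq_exchange_mat mat_app_exchange_mat_indicator)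
    have "mat_app (A n) (mat_app (J n) (indicator {j'}))
        = mat_app (J n) (mat_app (A n) (indicator {j'}))"
      using A_J_commute A_carrier[of n] by (simp add: J_def mat_app_mult[symmetric])
    then show ?thesis
      using j' left[OF j'(1)] by (simp add: Q_kernel_J)
  qed (rule left)
qed

lemma A_mult_Q: "A n * Q n = 0\<^sub>m (2 * n + 4) (2 * n + 4)"
proof (rule mat_eq_zero_if_mat_app_indicator)
  show "A n * Q n \<in> carrier_mat (2 * n + 4) (2 * n + 4)"
    using A_carrier Q_carrier by (rule mult_carrier_mat)
  fix j assume "j < 2 * n + 4"
  then show "mat_app (A n * Q n) (indicator {j}) = 0"
    using A_carrier[of n] Q_carrier Q_kills_A_column by (simp add: Q_commute(1) mat_app_mult)
qed

end

theorem lemma6: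
  fixes n :: nat
  assumes "n \<ge> 1"
  shows "A n * (A n ^\<^sub>m (n+1) - 2 \<cdot>\<^sub>m A n ^\<^sub>m n - 2 \<cdot>\<^sub>m J n)
           = 0\<^sub>m (2*n+4) (2*n+4)"
proof -
  interpret tent_matrix n
    using assms by unfold_locales
  show ?thesis
    using A_mult_Q unfolding Q_def .
qed

end
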